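(* Under the standing assumptions, writing (R1) for $\mathscr{R}(A^*AB)=\mathscr{R}(B)$ and (R2) for $\mathscr{R}(CC^*B^* )=\mathscr{R}(B^* )$, the following hold. (57) $M^\dagger\in\{C^{-1}B^{(1)}A^{-1}\}$. (58) $M^\dagger\in\{C^{-1}B^{(1,2)}A^{-1}\}$. (59) $M^\dagger\in\{C^{-1}B^{(1,3)}A^{-1}\}\Leftrightarrow$ (R1). (60) $M^\dagger\in\{C^{-1}B^{(1,4)}A^{-1}\}\Leftrightarrow$ (R2). (61) $M^\dagger\in\{C^{-1}B^{(1,2,3)}A^{-1}\}\Leftrightarrow$ (R1). (62) $M^\dagger\in\{C^{-1}B^{(1,2,4)}A^{-1}\}\Leftrightarrow$ (R2). (63) $M^\dagger\in\{C^{-1}B^{(1,3,4)}A^{-1}\}\Leftrightarrow$ (R1) and (R2). (64) The following are equivalent: (i) $M^\dagger=C^{-1}B^\dagger A^{-1}$; (ii) (R1) and (R2); (iii) $\mathscr{R}(AA^*M)=\mathscr{R}(M)$ and $\mathscr{R}(C^*CM^* )=\mathscr{R}(M^* )$; (iv) $(A^*AB)(A^*AB)^\dagger=BB^\dagger$ and $(BCC^* )^\dagger(BCC^* )=B^\dagger B$; (v) $A^*ABB^*$ and $B^*BCC^*$ are both EP; (vi) $AA^*MM^*$ and $M^*MC^*C$ are both EP.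
   Context: Standing assumptions: $m,n\ge1$; $A\in\mathbb{C}^{m\times m}$ and $C\in\mathbb{C}^{n\times n}$ are nonsingular; $B\in\mathbb{C}^{m\times n}$; $M=ABC$. For a complex matrix $X$, $X^*$ is its conjugate transpose, $r(X)$ its rank and $\mathscr{R}(X)$ its column space. A square matrix $X$ is called EP (range Hermitian) if $\mathscr{R}(X^* )=\mathscr{R}(X)$. For $X\in\mathbb{C}^{p\times q}$, a matrix $G\in\mathbb{C}^{q\times p}$ is called an $\{i,\ldots,j\}$-generalized inverse of $X$ (written $X^{(i,\ldots,j)}$) if it satisfies the equations numbered $i,\ldots,j$ among the four Penrose equations (i) $XGX=X$, (ii) $GXG=G$, (iii) $(XG)^*=XG$, (iv) $(GX)^*=GX$; $\{X^{(i,\ldots,j)}\}$ denotes the set of all such $G$. The Moore–Penrose inverse $X^\dagger$ is the unique matrix satisfying all four equations. For a type $(k,\ldots,l)$, $\{C^{-1}B^{(k,\ldots,l)}A^{-1}\}:=\{C^{-1}GA^{-1}: G\in\{B^{(k,\ldots,l)}\}\}$. *)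

theory Defs
  imports "Jordan_Normal_Form.Schur_Decomposition"
begin

abbreviation cadj :: "complex mat \<Rightarrow> complex mat" where
  "cadj X \<equiv> mat_adjoint X"

definition colspace :: "complex mat \<Rightarrow> complex vec set" where
  "colspace X = {X *\<^sub>v x | x. x \<in> carrier_vec (dim_col X)}"

definition mat_inv :: "complex mat \<Rightarrow> complex mat" where
  "mat_inv X = (SOME Y. Y \<in> carrier_mat (dim_row X) (dim_row X) \<and>
                        X * Y = 1\<^sub>m (dim_row X) \<and> Y * X = 1\<^sub>m (dim_row X))"

text \<open>The set of {i,...,j}-generalized inverses of X, indexed by the set I of
  Penrose equations to be satisfied.\<close>
definition gen_inv :: "nat set \<Rightarrow> complex mat \<Rightarrow> complex mat set" where
  "gen_inv I X = {G. G \<in> carrier_mat (dim_col X) (dim_row X) \<and>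
     (1 \<in> I \<longrightarrow> X * G * X = X) \<and>
     (2 \<in> I \<longrightarrow> G * X * G = G) \<and>
     (3 \<in> I \<longrightarrow> cadj (X * G) = X * G) \<and>
     (4 \<in> I \<longrightarrow> cadj (G * X) = G * X)}"

definition mp_inv :: "complex mat \<Rightarrow> complex mat" where
  "mp_inv X = (THE G. G \<in> gen_inv {1,2,3,4} X)"

definition EP :: "complex mat \<Rightarrow> bool" where
  "EP X \<longleftrightarrow> colspace (cadj X) = colspace X"

definition trans_gen_inv :: "complex mat \<Rightarrow> nat set \<Rightarrow> complex mat \<Rightarrow> complex mat \<Rightarrow> complex mat set" where
  "trans_gen_inv C I B A = {mat_inv C * G * mat_inv A | G. G \<in> gen_inv I B}"

end

theory Submission
  imports Defs
begin

text \<open>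
  Put \<open>G = C M\<^sup>\<dagger> A\<close>, so that \<open>M\<^sup>\<dagger> = C\<^sup>-\<^sup>1 G A\<^sup>-\<^sup>1\<close>; then \<open>M\<^sup>\<dagger>\<close> has the form
  \<open>C\<^sup>-\<^sup>1 X A\<^sup>-\<^sup>1\<close> with \<open>X\<close> an \<open>I\<close>-inverse of \<open>B\<close> exactly when \<open>G\<close> itself is one. Since
  \<open>B G = A\<^sup>-\<^sup>1 (M M\<^sup>\<dagger>) A\<close> and \<open>G B = C (M\<^sup>\<dagger> M) C\<^sup>-\<^sup>1\<close>, \<open>G\<close> is always a
  \<open>{1,2}\<close>-inverse of \<open>B\<close>. The matrix \<open>A\<^sup>-\<^sup>1 (M M\<^sup>\<dagger>) A\<close> is Hermitian iff the
  orthogonal projector \<open>M M\<^sup>\<dagger>\<close> commutes with \<open>A A\<^sup>*\<close>, i.e. iff \<open>A A\<^sup>*\<close> maps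
  \<open>R(M)\<close> onto itself; cancelling the nonsingular factors \<open>A\<close> and \<open>C\<close> this is
  \<open>R(A\<^sup>* A B) = R(B)\<close>. The condition on \<open>G B\<close> is the same statement for
  \<open>M\<^sup>* = C\<^sup>* B\<^sup>* A\<^sup>*\<close>. The remaining conditions restate these two range equalities
  through the projectors \<open>X X\<^sup>\<dagger>\<close> and through EP matrices.

  The Moore--Penrose inverse itself is assembled from orthogonal projectors onto the column
  spaces of \<open>X\<close> and \<open>X\<^sup>*\<close>, each built by Gram--Schmidt steps, one column at a time.
\<close>

lemma dim_row_adjoint[simp]: "dim_row (cadj X) = dim_col X"
  and dim_col_adjoint[simp]: "dim_col (cadj X) = dim_row X"
  unfolding mat_adjoint_def by auto

lemma adjoint_index[simp]:
  "i < dim_col X \<Longrightarrow> j < dim_row X \<Longrightarrow> cadj X $$ (i, j) = cnj (X $$ (j, i))"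
  unfolding mat_adjoint_def by (auto simp: mat_of_rows_def)

lemma adjoint_carrier_mat[simp]: "X \<in> carrier_mat a b \<Longrightarrow> cadj X \<in> carrier_mat b a"
  by (intro carrier_matI) auto

lemma adjoint_adjoint[simp]: "cadj (cadj X) = X"
  by (rule eq_matI) auto

lemma adjoint_one[simp]: "cadj (1\<^sub>m k) = 1\<^sub>m k"
  by (rule eq_matI) auto

lemma adjoint_zero[simp]: "cadj (0\<^sub>m a b) = 0\<^sub>m b a"
  by (rule eq_matI) auto

lemma adjoint_add:
  "dim_row X = dim_row Y \<Longrightarrow> dim_col X = dim_col Y \<Longrightarrow> cadj (X + Y) = cadj X + cadj Y"
  by (rule eq_matI) auto

lemma adjoint_smult: "cadj (r \<cdot>\<^sub>m X) = cnj r \<cdot>\<^sub>m cadj X"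
  by (rule eq_matI) auto

lemma adjoint_mult: "dim_col X = dim_row Y \<Longrightarrow> cadj (X * Y) = cadj Y * cadj X"
proof (rule eq_matI)
  fix i j assume d: "dim_col X = dim_row Y"
    and i: "i < dim_row (cadj Y * cadj X)" and j: "j < dim_col (cadj Y * cadj X)"
  have "cadj (X * Y) $$ (i, j) = cnj (\<Sum>k<dim_row Y. X $$ (j, k) * Y $$ (k, i))"
    using i j d by (simp add: scalar_prod_def atLeast0LessThan)
  also have "\<dots> = (\<Sum>k<dim_row Y. cnj (Y $$ (k, i)) * cnj (X $$ (j, k)))"
    by (simp add: mult.commute)
  also have "\<dots> = (cadj Y * cadj X) $$ (i, j)"
    using i j d by (simp add: scalar_prod_def atLeast0LessThan)
  finally show "cadj (X * Y) $$ (i, j) = (cadj Y * cadj X) $$ (i, j)" .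
qed auto

lemma assoc_mult_mat_dims:
  "dim_col X = dim_row Y \<Longrightarrow> dim_col Y = dim_row Z \<Longrightarrow>
   X * Y * Z = X * (Y * (Z :: 'a :: semiring_0 mat))"
  by (rule assoc_mult_mat[of X "dim_row X" "dim_col X" Y "dim_col Y" Z "dim_col Z"]) auto

lemma adjoint_mult_self_eq_zero:
  assumes "cadj X * X = 0\<^sub>m (dim_col X) (dim_col X)"
  shows "X = 0\<^sub>m (dim_row X) (dim_col X)"
proof (rule eq_matI)
  fix i j assume i: "i < dim_row (0\<^sub>m (dim_row X) (dim_col X) :: complex mat)"
    and j: "j < dim_col (0\<^sub>m (dim_row X) (dim_col X) :: complex mat)"
  have "col X j \<bullet>c col X j = (\<Sum>k<dim_row X. cnj (X $$ (k, j)) * X $$ (k, j))"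
    using j by (simp add: scalar_prod_def atLeast0LessThan mult.commute)
  also have "\<dots> = (cadj X * X) $$ (j, j)"
    using j by (simp add: scalar_prod_def atLeast0LessThan)
  finally have "col X j = 0\<^sub>v (dim_row X)"
    using assms j conjugate_square_eq_0_vec[of "col X j" "dim_row X"] by simp
  then have "col X j $ i = 0" using i by simp
  then show "X $$ (i, j) = 0\<^sub>m (dim_row X) (dim_col X) $$ (i, j)"
    using i j by simp
qed auto

section \<open>Orthogonal projectors onto column spaces\<close>

lemma identity_split_last_column:
  "\<exists>S E. S \<in> carrier_mat (Suc l) l \<and> E \<in> carrier_mat (Suc l) 1 \<and>
     S * cadj S + E * cadj E = (1\<^sub>m (Suc l) :: complex mat)"
proof (intro exI conjI)
  let ?S = "mat (Suc l) l (\<lambda>(i, j). if i = j then 1 else 0) :: complex mat"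
  let ?E = "mat (Suc l) 1 (\<lambda>(i, j). if i = l then 1 else 0) :: complex mat"
  show "?S \<in> carrier_mat (Suc l) l" "?E \<in> carrier_mat (Suc l) 1" by auto
  show "?S * cadj ?S + ?E * cadj ?E = 1\<^sub>m (Suc l)"
  proof (rule eq_matI)
    fix i j assume i: "i < dim_row (1\<^sub>m (Suc l) :: complex mat)"
      and j: "j < dim_col (1\<^sub>m (Suc l) :: complex mat)"
    have "(?S * cadj ?S) $$ (i, j) = (\<Sum>t<l. (if i = t then 1 else 0) * cnj (if j = t then 1 else 0))"
      using i j by (simp add: scalar_prod_def atLeast0LessThan)
    also have "\<dots> = (\<Sum>t<l. if t = i then (if j = i then 1 else 0) else 0)"
      by (rule sum.cong) auto
    also have "\<dots> = (if i < l \<and> j = i then 1 else 0)"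
      by (simp add: sum.delta)
    finally show "(?S * cadj ?S + ?E * cadj ?E) $$ (i, j) = 1\<^sub>m (Suc l) $$ (i, j)"
      using i j by (auto simp: scalar_prod_def)
  qed auto
qed

text \<open>For \<open>c = 0\<close> the division by zero gives \<open>W = 0\<close>, and both claims hold trivially.\<close>

lemma column_projector:
  fixes c :: "complex mat"
  assumes c: "c \<in> carrier_mat k 1"
  defines "W \<equiv> (1 / (cadj c * c) $$ (0, 0)) \<cdot>\<^sub>m cadj c"
  shows "cadj (c * W) = c * W" and "c * (W * c) = c"
proof -
  define d where "d = (cadj c * c) $$ (0, 0)"
  have W: "W \<in> carrier_mat 1 k"
    unfolding W_def using c by auto
  have ctc: "cadj c * c = d \<cdot>\<^sub>m 1\<^sub>m 1"
    by (rule eq_matI) (use c in \<open>auto simp: d_def\<close>)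
  have "cnj d = d"
  proof -
    have "cadj (cadj c * c) = cadj c * c" using c by (simp add: adjoint_mult)
    then have "cadj (cadj c * c) $$ (0, 0) = (cadj c * c) $$ (0, 0)" by simp
    then show ?thesis using c by (simp add: d_def)
  qed
  then have "cadj W = (1 / d) \<cdot>\<^sub>m c"
    by (simp add: W_def d_def[symmetric] adjoint_smult)
  then have "cadj (c * W) = (1 / d) \<cdot>\<^sub>m c * cadj c"
    using c W by (simp add: adjoint_mult)
  also have "\<dots> = c * W"
    unfolding W_def d_def[symmetric] using c
    by (simp add: mult_smult_assoc_mat[OF c adjoint_carrier_mat[OF c]]
        mult_smult_distrib[OF c adjoint_carrier_mat[OF c]])
  finally show "cadj (c * W) = c * W" .
  show "c * (W * c) = c"
  proof (cases "d = 0")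
    case True
    then have "cadj c * c = 0\<^sub>m (dim_col c) (dim_col c)"
      using ctc c by (auto intro!: eq_matI)
    then have "c = 0\<^sub>m k 1"
      using adjoint_mult_self_eq_zero[of c] c by auto
    then show ?thesis
      using W by simp
  next
    case False
    have "W * c = (1 / d) \<cdot>\<^sub>m (d \<cdot>\<^sub>m 1\<^sub>m 1)"
      unfolding W_def d_def[symmetric] ctc[symmetric]
      by (rule mult_smult_assoc_mat[OF adjoint_carrier_mat[OF c] c])
    then have "W * c = 1\<^sub>m 1"
      using False by (auto intro!: eq_matI)
    then show ?thesis
      using c by simp
  qed
qed

lemma projector_add_orthogonal_column:
  fixes P c :: "complex mat"
  assumes P: "P \<in> carrier_mat k k" and herm: "cadj P = P" and idem: "P * P = P"
    and c: "c \<in> carrier_mat k 1" and Pc: "P * c = 0\<^sub>m k 1"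
  defines "W \<equiv> (1 / (cadj c * c) $$ (0, 0)) \<cdot>\<^sub>m cadj c"
  shows "cadj (P + c * W) = P + c * W" and "(P + c * W) * (P + c * W) = P + c * W"
    and "(P + c * W) * P = P" and "(P + c * W) * c = c"
proof -
  have W: "W \<in> carrier_mat 1 k" and cW: "c * W \<in> carrier_mat k k"
    unfolding W_def using c by auto
  note cW_props = column_projector[OF c, folded W_def]
  show "cadj (P + c * W) = P + c * W"
    using P c W herm cW_props(1) by (simp add: adjoint_add)
  have "cadj c * P = cadj (P * c)"
    using P c herm by (simp add: adjoint_mult)
  then have "cadj c * P = 0\<^sub>m 1 k"
    using Pc by simp
  then have WP: "W * P = 0\<^sub>m 1 k"
    unfolding W_def by (simp add: mult_smult_assoc_mat[OF adjoint_carrier_mat[OF c] P])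
  show PWP: "(P + c * W) * P = P"
    using P c W cW idem WP by (simp add: add_mult_distrib_mat[OF P cW P] assoc_mult_mat[OF c W P])
  show PWc: "(P + c * W) * c = c"
    using P c W cW Pc cW_props(2) by (simp add: add_mult_distrib_mat[OF P cW c] assoc_mult_mat[OF c W c])
  have "(P + c * W) * (P + c * W) = (P + c * W) * P + (P + c * W) * c * W"
    using P c W cW by (simp add: mult_add_distrib_mat[of _ k k] assoc_mult_mat_dims)
  then show "(P + c * W) * (P + c * W) = P + c * W"
    using PWP PWc by simp
qed

definition range_projector :: "complex mat \<Rightarrow> complex mat \<Rightarrow> bool" where
  "range_projector Y P \<longleftrightarrow> P \<in> carrier_mat (dim_row Y) (dim_row Y) \<and> cadj P = P \<and> P * P = P \<and>
     P * Y = Y \<and> (\<exists>Z \<in> carrier_mat (dim_col Y) (dim_row Y). P = Y * Z)"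

lemma range_projectorD:
  assumes "range_projector Y P"
  obtains Z where "P \<in> carrier_mat (dim_row Y) (dim_row Y)" "cadj P = P" "P * P = P" "P * Y = Y"
    "Z \<in> carrier_mat (dim_col Y) (dim_row Y)" "P = Y * Z"
  using assms unfolding range_projector_def by blast

lemma range_projector_extend_column:
  fixes Y0 a P :: "complex mat"
  assumes Y0: "Y0 \<in> carrier_mat k l" and a: "a \<in> carrier_mat k 1" and "range_projector Y0 P"
  obtains P' Z0 Z1 where "P' \<in> carrier_mat k k" "cadj P' = P'" "P' * P' = P'"
    "P' * Y0 = Y0" "P' * a = a" "Z0 \<in> carrier_mat l k" "Z1 \<in> carrier_mat 1 k" "P' = Y0 * Z0 + a * Z1"
proof -
  obtain Z where P: "P \<in> carrier_mat k k" and herm: "cadj P = P" and idem: "P * P = P"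
    and PY0: "P * Y0 = Y0" and Z: "Z \<in> carrier_mat l k" and PZ: "P = Y0 * Z"
    using range_projectorD[OF \<open>range_projector Y0 P\<close>] Y0 by (metis carrier_matD)
  define c where "c = a - P * a"
  have c: "c \<in> carrier_mat k 1" unfolding c_def using a P by (simp add: minus_carrier_mat)
  have a_split: "a = c + P * a"
    unfolding c_def using a P by (auto intro!: eq_matI)
  have "P * c = P * a - P * (P * a)"
    unfolding c_def using P a by (simp add: mult_minus_distrib_mat[of _ k k])
  also have "\<dots> = 0\<^sub>m k 1"
    using P a idem by (simp add: assoc_mult_mat[OF P P a, symmetric])
  finally have "P * c = 0\<^sub>m k 1" .
  define W where "W = (1 / (cadj c * c) $$ (0, 0)) \<cdot>\<^sub>m cadj c"
  note proj = projector_add_orthogonal_column[OF P herm idem c \<open>P * c = 0\<^sub>m k 1\<close>, folded W_def]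
  have W: "W \<in> carrier_mat 1 k" unfolding W_def using c by simp
  show thesis
  proof (rule that[of "P + c * W" "Z - Z * a * W" W])
    have "(P + c * W) * Y0 = ((P + c * W) * P) * Y0"
      using P c W Y0 PY0 by (simp add: assoc_mult_mat_dims)
    then show "(P + c * W) * Y0 = Y0"
      using proj(3) PY0 by simp
    have "(P + c * W) * a = (P + c * W) * c + ((P + c * W) * P) * a"
      using P c W a by (subst a_split) (simp add: mult_add_distrib_mat[of _ k k] assoc_mult_mat_dims)
    then show "(P + c * W) * a = a"
      using proj(3,4) a_split by simp
    have "Y0 * (Z - Z * a * W) = P - P * a * W"
      using Y0 Z a W PZ by (simp add: mult_minus_distrib_mat[of _ k l] assoc_mult_mat_dims)
    moreover have "c * W = a * W - P * a * W"
      unfolding c_def using P a W by (simp add: minus_mult_distrib_mat[of _ k 1])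
    ultimately show "P + c * W = Y0 * (Z - Z * a * W) + a * W"
      using P a W by (auto intro!: eq_matI)
  qed (use P c W Z proj in auto)
qed

lemma range_projector_split_columns:
  fixes Y S E P :: "complex mat"
  assumes Y: "Y \<in> carrier_mat k (Suc l)" and S: "S \<in> carrier_mat (Suc l) l"
    and E: "E \<in> carrier_mat (Suc l) 1" and SE: "S * cadj S + E * cadj E = 1\<^sub>m (Suc l)"
    and "range_projector (Y * S) P"
  shows "\<exists>P'. range_projector Y P'"
proof -
  have Y0: "Y * S \<in> carrier_mat k l" and a: "Y * E \<in> carrier_mat k 1"
    using Y S E by auto
  obtain P' Z0 Z1 where P': "P' \<in> carrier_mat k k" "cadj P' = P'" "P' * P' = P'"
    and fix_Y0: "P' * (Y * S) = Y * S" and fix_a: "P' * (Y * E) = Y * E"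
    and Z0: "Z0 \<in> carrier_mat l k" and Z1: "Z1 \<in> carrier_mat 1 k"
    and P'_eq: "P' = Y * S * Z0 + Y * E * Z1"
    using range_projector_extend_column[OF Y0 a \<open>range_projector (Y * S) P\<close>] by metis
  have "Y * (S * cadj S + E * cadj E) = Y * S * cadj S + Y * E * cadj E"
    using Y S E by (simp add: mult_add_distrib_mat[of Y k "Suc l" _ "Suc l"] assoc_mult_mat_dims)
  then have Y_split: "Y = Y * S * cadj S + Y * E * cadj E"
    using Y SE by simp
  have "P' * Y = P' * (Y * S) * cadj S + P' * (Y * E) * cadj E"
    using Y S E P'(1)
    by (subst Y_split) (simp add: mult_add_distrib_mat[of P' k k _ "Suc l"] assoc_mult_mat_dims)
  then have "P' * Y = Y"
    using fix_Y0 fix_a Y_split by simp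
  moreover have "P' = Y * (S * Z0 + E * Z1)"
    using Y S E Z0 Z1 P'_eq
    by (simp add: mult_add_distrib_mat[of Y k "Suc l" _ k] assoc_mult_mat_dims)
  moreover have "S * Z0 + E * Z1 \<in> carrier_mat (Suc l) k"
    using S E Z0 Z1 by simp
  ultimately have "range_projector Y P'"
    using Y P' unfolding range_projector_def by auto
  then show ?thesis ..
qed

lemma range_projector_exists: "\<exists>P. range_projector Y P"
proof -
  have "\<exists>P. range_projector Y P" if "Y \<in> carrier_mat k l" for Y :: "complex mat" and k l
    using that
  proof (induction l arbitrary: Y)
    case 0
    have "0\<^sub>m k k * Y = Y" "Y * 0\<^sub>m 0 k = 0\<^sub>m k k"
      using "0" by (auto intro!: eq_matI simp: scalar_prod_def)
    then have "range_projector Y (0\<^sub>m k k)"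
      using "0" unfolding range_projector_def by force
    then show ?case ..
  next
    case (Suc l)
    obtain S E where S: "S \<in> carrier_mat (Suc l) l" and E: "E \<in> carrier_mat (Suc l) 1"
      and SE: "S * cadj S + E * cadj E = 1\<^sub>m (Suc l)"
      using identity_split_last_column by blast
    obtain P where "range_projector (Y * S) P"
      using Suc.IH Suc.prems S by (meson mult_carrier_mat)
    then show ?case
      using range_projector_split_columns[OF Suc.prems S E SE] by blast
  qed
  then show ?thesis by (metis carrier_matI)
qed

section \<open>The Moore--Penrose inverse\<close>

lemma mp_inverse_exists: "\<exists>G. G \<in> gen_inv {1, 2, 3, 4} X"
proof -
  obtain Pc Zc where Pc: "Pc \<in> carrier_mat (dim_row X) (dim_row X)" "cadj Pc = Pc" "Pc * Pc = Pc"
    and PcX: "Pc * X = X" and Zc: "Zc \<in> carrier_mat (dim_col X) (dim_row X)" and PcZ: "Pc = X * Zc"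
    using range_projector_exists[of X] range_projectorD by metis
  obtain Pr Zr where Pr: "Pr \<in> carrier_mat (dim_col X) (dim_col X)" "cadj Pr = Pr" "Pr * Pr = Pr"
    and PrX: "Pr * cadj X = cadj X" and Zr: "Zr \<in> carrier_mat (dim_row X) (dim_col X)"
    and PrZ: "Pr = cadj X * Zr"
    using range_projector_exists[of "cadj X"] range_projectorD[of "cadj X"]
    unfolding dim_row_adjoint dim_col_adjoint by metis
  have XPr: "X * Pr = X"
    using arg_cong[OF PrX, of cadj] Pr by (simp add: adjoint_mult)
  have PrZ': "Pr = cadj Zr * X"
    using arg_cong[OF PrZ, of cadj] Pr Zr by (simp add: adjoint_mult)
  define G where "G = Pr * Zc * Pc"
  have G: "G \<in> carrier_mat (dim_col X) (dim_row X)"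
    unfolding G_def using Pr Pc Zc by simp
  have XG: "X * G = Pc"
  proof -
    have "X * G = (X * Pr) * Zc * Pc"
      unfolding G_def using Pr Pc Zc by (simp add: assoc_mult_mat_dims)
    also have "\<dots> = Pc"
      using XPr PcZ Pc by simp
    finally show ?thesis .
  qed
  have GX: "G * X = Pr"
  proof -
    have "G * X = cadj Zr * ((X * Zc) * (Pc * X))"
      unfolding G_def PrZ' using Pc Zc Zr by (simp add: assoc_mult_mat_dims)
    also have "\<dots> = Pr"
      using PcX PcZ PrZ' by simp
    finally show ?thesis .
  qed
  have "G * X * G = (Pr * Pr) * Zc * Pc"
    unfolding GX unfolding G_def using Pr(1) Pc(1) Zc by (simp add: assoc_mult_mat_dims)
  then have "G * X * G = G"
    unfolding G_def by (simp only: Pr(3))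
  then have "G \<in> gen_inv {1, 2, 3, 4} X"
    unfolding gen_inv_def using G XG GX PcX Pc Pr by simp
  then show ?thesis ..
qed

lemma gen_inv_antimono: "I \<subseteq> J \<Longrightarrow> gen_inv J X \<subseteq> gen_inv I X"
  unfolding gen_inv_def by auto

lemma gen_inv_13_mult_eq:
  assumes G: "G \<in> gen_inv {1, 3} X" and H: "H \<in> gen_inv {1, 3} X"
  shows "X * G = X * H"
proof -
  have dims: "G \<in> carrier_mat (dim_col X) (dim_row X)" "H \<in> carrier_mat (dim_col X) (dim_row X)"
    and XGX: "X * G * X = X" and XHX: "X * H * X = X"
    and herm: "cadj (X * G) = X * G" "cadj (X * H) = X * H"
    using G H unfolding gen_inv_def by auto
  have XhX: "cadj X * (X * H) = cadj X"
    using arg_cong[OF XHX, of cadj] dims herm(2) adjoint_mult[of "X * H" X] adjoint_mult[of X H] by simp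
  have "X * G = cadj G * cadj X"
    using herm(1) dims adjoint_mult[of X G] by simp
  also have "\<dots> = (cadj G * cadj X) * (X * H)"
    using dims by (simp add: assoc_mult_mat_dims XhX)
  also have "\<dots> = (X * G * X) * H"
    using herm(1) dims adjoint_mult[of X G] by (simp add: assoc_mult_mat_dims)
  finally show ?thesis
    using XGX by simp
qed

lemma adjoint_in_gen_inv_1234:
  assumes "G \<in> gen_inv {1, 2, 3, 4} X"
  shows "cadj G \<in> gen_inv {1, 2, 3, 4} (cadj X)"
proof -
  have G: "G \<in> carrier_mat (dim_col X) (dim_row X)"
    and penrose: "X * G * X = X" "G * X * G = G" "cadj (X * G) = X * G" "cadj (G * X) = G * X"
    using assms unfolding gen_inv_def by auto
  have "cadj X * cadj G * cadj X = cadj (X * G * X)"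
    and "cadj G * cadj X * cadj G = cadj (G * X * G)"
    and "cadj X * cadj G = cadj (G * X)" and "cadj G * cadj X = cadj (X * G)"
    using G by (simp_all add: adjoint_mult assoc_mult_mat_dims)
  then show ?thesis
    using G penrose unfolding gen_inv_def by simp
qed

lemma mp_inverse_unique:
  assumes G: "G \<in> gen_inv {1, 2, 3, 4} X" and H: "H \<in> gen_inv {1, 2, 3, 4} X"
  shows "G = H"
proof -
  have sub13: "gen_inv {1, 2, 3, 4} Y \<subseteq> gen_inv {1, 3} Y" for Y
    by (rule gen_inv_antimono) auto
  have G': "G \<in> carrier_mat (dim_col X) (dim_row X)" "G * X * G = G"
    and H': "H \<in> carrier_mat (dim_col X) (dim_row X)" "H * X * H = H"
    using G H unfolding gen_inv_def by auto
  have XG: "X * G = X * H"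
    using gen_inv_13_mult_eq G H sub13 by blast
  have "cadj X * cadj G = cadj X * cadj H"
    using gen_inv_13_mult_eq adjoint_in_gen_inv_1234[OF G] adjoint_in_gen_inv_1234[OF H] sub13 by blast
  then have GX: "G * X = H * X"
    using G' H' by (metis adjoint_adjoint adjoint_mult carrier_matD)
  have "G = G * (X * G)"
    using G' by (simp add: assoc_mult_mat_dims)
  also have "\<dots> = (H * X) * H"
    using G' H' XG GX by (simp add: assoc_mult_mat_dims)
  finally show ?thesis
    using H' by simp
qed

lemma mp_inv_in_gen_inv: "mp_inv X \<in> gen_inv {1, 2, 3, 4} X"
  unfolding mp_inv_def using mp_inverse_exists mp_inverse_unique by (metis theI)

lemma mp_inv_eqI: "G \<in> gen_inv {1, 2, 3, 4} X \<Longrightarrow> mp_inv X = G"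
  using mp_inv_in_gen_inv mp_inverse_unique by blast

lemma mp_inv_carrier_mat: "mp_inv X \<in> carrier_mat (dim_col X) (dim_row X)"
  using mp_inv_in_gen_inv unfolding gen_inv_def by blast

lemma mp_inv_carrier_matI[simp]: "X \<in> carrier_mat a b \<Longrightarrow> mp_inv X \<in> carrier_mat b a"
  using mp_inv_carrier_mat[of X] by auto

lemma dim_row_mp_inv[simp]: "dim_row (mp_inv X) = dim_col X"
  and dim_col_mp_inv[simp]: "dim_col (mp_inv X) = dim_row X"
  using mp_inv_carrier_mat carrier_matD by blast+

lemma mp_inv_penrose:
  shows "X * mp_inv X * X = X" and "mp_inv X * X * mp_inv X = mp_inv X"
    and "cadj (X * mp_inv X) = X * mp_inv X" and "cadj (mp_inv X * X) = mp_inv X * X"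
  using mp_inv_in_gen_inv unfolding gen_inv_def by auto

lemma mp_inv_adjoint: "mp_inv (cadj X) = cadj (mp_inv X)"
  by (rule mp_inv_eqI, rule adjoint_in_gen_inv_1234, rule mp_inv_in_gen_inv)

lemma mp_inv_mult_self: "mp_inv X * X = cadj X * mp_inv (cadj X)"
  using mp_inv_penrose(4)[of X] by (simp add: adjoint_mult mp_inv_adjoint)

lemma invertible_matI:
  assumes "K \<in> carrier_mat k k" "L \<in> carrier_mat k k" "K * L = 1\<^sub>m k" "L * K = 1\<^sub>m k"
  shows "invertible_mat K"
  using assms unfolding invertible_mat_def inverts_mat_def square_mat.simps by auto

lemma mat_inv_inverts:
  assumes K: "K \<in> carrier_mat k k" and "invertible_mat K"
  shows "mat_inv K \<in> carrier_mat k k" "K * mat_inv K = 1\<^sub>m k" "mat_inv K * K = 1\<^sub>m k"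
proof -
  obtain L where "K * L = 1\<^sub>m k" "L * K = 1\<^sub>m (dim_row L)"
    using assms unfolding invertible_mat_def inverts_mat_def by auto
  moreover from this have "L \<in> carrier_mat k k"
    using K by (metis carrier_matD carrier_matI index_mult_mat(2,3) index_one_mat(2,3))
  ultimately have "\<exists>L. L \<in> carrier_mat (dim_row K) (dim_row K) \<and>
      K * L = 1\<^sub>m (dim_row K) \<and> L * K = 1\<^sub>m (dim_row K)"
    using K by auto
  then have "mat_inv K \<in> carrier_mat (dim_row K) (dim_row K) \<and> K * mat_inv K = 1\<^sub>m (dim_row K) \<and>
      mat_inv K * K = 1\<^sub>m (dim_row K)"
    unfolding mat_inv_def by (rule someI_ex)
  then show "mat_inv K \<in> carrier_mat k k" "K * mat_inv K = 1\<^sub>m k" "mat_inv K * K = 1\<^sub>m k"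
    using K by auto
qed

lemma mat_inv_cancel:
  assumes "K \<in> carrier_mat k k" "invertible_mat K" "dim_row X = k"
  shows "mat_inv K * (K * X) = X" and "K * (mat_inv K * X) = X"
  using assms mat_inv_inverts[OF assms(1,2)]
  by (simp_all add: assoc_mult_mat_dims[of "mat_inv K" K X, symmetric]
      assoc_mult_mat_dims[of K "mat_inv K" X, symmetric])

lemma mat_inv_commute:
  assumes K: "K \<in> carrier_mat k k" "invertible_mat K" and P: "P \<in> carrier_mat k k"
    and comm: "K * P = P * K"
  shows "mat_inv K * P = P * mat_inv K"
proof -
  note Ki = mat_inv_inverts[OF K] mat_inv_cancel[OF K]
  have "mat_inv K * P = mat_inv K * (P * K) * mat_inv K"
    using P K Ki by (simp add: assoc_mult_mat_dims)
  also have "\<dots> = P * mat_inv K"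
    using P K Ki by (simp flip: comm add: assoc_mult_mat_dims)
  finally show ?thesis .
qed

lemma invertible_mat_adjoint:
  assumes K: "K \<in> carrier_mat k k" and "invertible_mat K"
  shows "invertible_mat (cadj K)"
proof (rule invertible_matI)
  note inv = mat_inv_inverts[OF assms]
  show "cadj K * cadj (mat_inv K) = 1\<^sub>m k" "cadj (mat_inv K) * cadj K = 1\<^sub>m k"
    using K inv by (simp_all flip: adjoint_mult)
qed (use K mat_inv_inverts[OF assms] in auto)

lemma invertible_mat_mult:
  fixes K L :: "complex mat"
  assumes K: "K \<in> carrier_mat k k" "invertible_mat K" and L: "L \<in> carrier_mat k k" "invertible_mat L"
  shows "invertible_mat (K * L)"
proof (rule invertible_matI)
  note K' = mat_inv_inverts[OF K] and L' = mat_inv_inverts[OF L]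
  show "K * L * (mat_inv L * mat_inv K) = 1\<^sub>m k" "mat_inv L * mat_inv K * (K * L) = 1\<^sub>m k"
    using K L K' L' by (simp_all add: assoc_mult_mat_dims mat_inv_cancel[OF K] mat_inv_cancel[OF L])
qed (use K L mat_inv_inverts[OF K] mat_inv_inverts[OF L] in auto)

section \<open>Column spaces\<close>

lemma assoc_mult_mat_vec_dims:
  "dim_col X = dim_row Y \<Longrightarrow> v \<in> carrier_vec (dim_col Y) \<Longrightarrow> (X * Y) *\<^sub>v v = X *\<^sub>v (Y *\<^sub>v v)"
  by (rule assoc_mult_mat_vec[of X "dim_row X" "dim_col X" Y "dim_col Y"]) auto

lemma colspace_image: "colspace X = (\<lambda>x. X *\<^sub>v x) ` carrier_vec (dim_col X)"
  unfolding colspace_def by blast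

lemma colspace_mult_left:
  assumes "dim_col K = dim_row X"
  shows "colspace (K * X) = (\<lambda>v. K *\<^sub>v v) ` colspace X"
  unfolding colspace_image image_image using assms
  by (intro image_cong) (auto simp: assoc_mult_mat_vec_dims)

lemma colspace_mult_subset:
  assumes "dim_col X = dim_row Z"
  shows "colspace (X * Z) \<subseteq> colspace X"
proof -
  have "colspace (X * Z) = (\<lambda>x. X *\<^sub>v x) ` ((\<lambda>x. Z *\<^sub>v x) ` carrier_vec (dim_col Z))"
    unfolding colspace_image image_image using assms
    by (intro image_cong) (auto simp: assoc_mult_mat_vec_dims)
  also have "\<dots> \<subseteq> colspace X"
    unfolding colspace_image using assms by (intro image_mono) (auto intro!: carrier_vecI)
  finally show ?thesis .
qed

lemma col_in_colspace: "j < dim_col Y \<Longrightarrow> col Y j \<in> colspace Y"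
proof -
  assume j: "j < dim_col Y"
  have "col Y j = Y *\<^sub>v unit_vec (dim_col Y) j"
    by (rule eq_vecI) (use j in \<open>auto simp: scalar_prod_right_unit\<close>)
  then show ?thesis unfolding colspace_def by auto
qed

lemma colspace_subset_iff:
  assumes "dim_row Y = dim_row X"
  shows "colspace Y \<subseteq> colspace X \<longleftrightarrow> X * mp_inv X * Y = Y"
proof
  assume sub: "colspace Y \<subseteq> colspace X"
  show "X * mp_inv X * Y = Y"
  proof (rule mat_col_eqI)
    fix j assume j: "j < dim_col Y"
    then have "col Y j \<in> colspace X"
      using sub col_in_colspace by blast
    then obtain w where w: "w \<in> carrier_vec (dim_col X)" and Yj: "col Y j = X *\<^sub>v w"
      unfolding colspace_def by blast
    have "X * mp_inv X \<in> carrier_mat (dim_row X) (dim_row X)"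
      and "Y \<in> carrier_mat (dim_row X) (dim_col Y)"
      using assms by (intro carrier_matI; simp)+
    then have "col (X * mp_inv X * Y) j = (X * mp_inv X) *\<^sub>v col Y j"
      using j by (rule col_mult2)
    also have "\<dots> = (X * mp_inv X * X) *\<^sub>v w"
      unfolding Yj using w by (intro assoc_mult_mat_vec_dims[symmetric]) simp_all
    finally show "col (X * mp_inv X * Y) j = col Y j"
      unfolding Yj mp_inv_penrose(1) .
  qed (use assms in auto)
next
  assume "X * mp_inv X * Y = Y"
  then show "colspace Y \<subseteq> colspace X"
    using colspace_mult_subset[of X "mp_inv X * Y"] assms by (simp add: assoc_mult_mat_dims)
qed

lemma colspace_eq_iff_proj_eq:
  assumes dims: "dim_row Y = dim_row X"
  shows "colspace X = colspace Y \<longleftrightarrow> X * mp_inv X = Y * mp_inv Y"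
proof
  assume eq: "colspace X = colspace Y"
  have PY: "X * mp_inv X * Y = Y"
    using colspace_subset_iff[of Y X] dims eq by simp
  have QX: "Y * mp_inv Y * X = X"
    using colspace_subset_iff[of X Y] dims eq by simp
  have PQ: "X * mp_inv X * (Y * mp_inv Y) = Y * mp_inv Y"
    using dims assoc_mult_mat_dims[of "X * mp_inv X" Y "mp_inv Y"] PY by simp
  have QP: "Y * mp_inv Y * (X * mp_inv X) = X * mp_inv X"
    using dims assoc_mult_mat_dims[of "Y * mp_inv Y" X "mp_inv X"] QX by simp
  have "Y * mp_inv Y = cadj (X * mp_inv X * (Y * mp_inv Y))"
    using PQ mp_inv_penrose(3)[of Y] by simp
  also have "\<dots> = Y * mp_inv Y * (X * mp_inv X)"
    using dims by (simp add: adjoint_mult mp_inv_penrose(3))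
  finally show "X * mp_inv X = Y * mp_inv Y"
    using QP by simp
next
  assume e: "X * mp_inv X = Y * mp_inv Y"
  have "X * mp_inv X * Y = Y"
    unfolding e by (rule mp_inv_penrose(1))
  moreover have "Y * mp_inv Y * X = X"
    unfolding e[symmetric] by (rule mp_inv_penrose(1))
  ultimately show "colspace X = colspace Y"
    using colspace_subset_iff[of Y X] colspace_subset_iff[of X Y] dims by auto
qed

lemma colspace_mult_invertible_left_iff:
  assumes K: "K \<in> carrier_mat k k" "invertible_mat K" and dims: "dim_row X = k" "dim_row Y = k"
  shows "colspace (K * X) = colspace (K * Y) \<longleftrightarrow> colspace X = colspace Y"
proof
  assume "colspace (K * X) = colspace (K * Y)"
  then have "colspace (mat_inv K * (K * X)) = colspace (mat_inv K * (K * Y))"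
    using K mat_inv_inverts[OF K] dims by (simp add: colspace_mult_left)
  then show "colspace X = colspace Y"
    using dims mat_inv_cancel[OF K] by simp
qed (use K dims in \<open>simp add: colspace_mult_left\<close>)

lemma colspace_mult_invertible_right:
  assumes Z: "Z \<in> carrier_mat b b" "invertible_mat Z" and dims: "dim_col X = b"
  shows "colspace (X * Z) = colspace X"
proof
  show "colspace (X * Z) \<subseteq> colspace X"
    using Z dims by (intro colspace_mult_subset) simp
  note Zi = mat_inv_inverts[OF Z]
  have "X = X * Z * mat_inv Z"
    using Z Zi dims by (simp add: assoc_mult_mat_dims)
  then show "colspace X \<subseteq> colspace (X * Z)"
    using colspace_mult_subset[of "X * Z" "mat_inv Z"] Z Zi by simp
qed

lemma colspace_mult_adjoint_self: "colspace (X * cadj X) = colspace X"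
proof
  show "colspace (X * cadj X) \<subseteq> colspace X"
    by (intro colspace_mult_subset) simp
  have "X = X * (mp_inv X * X)"
    using mp_inv_penrose(1)[of X] by (simp add: assoc_mult_mat_dims)
  also have "mp_inv X * X = cadj X * cadj (mp_inv X)"
    using mp_inv_penrose(4)[of X] adjoint_mult[of "mp_inv X" X] by simp
  also have "X * (cadj X * cadj (mp_inv X)) = X * cadj X * cadj (mp_inv X)"
    by (intro assoc_mult_mat_dims[symmetric]) simp_all
  finally show "colspace X \<subseteq> colspace (X * cadj X)"
    using colspace_mult_subset[of "X * cadj X" "cadj (mp_inv X)"] by simp
qed

lemma colspace_mult_eq_if_commute_range_proj:
  assumes H: "H \<in> carrier_mat k k" "invertible_mat H" and N: "dim_row N = k"
    and comm: "H * (N * mp_inv N) = N * mp_inv N * H"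
  shows "colspace (H * N) = colspace N"
proof
  define P where "P = N * mp_inv N"
  have P: "P \<in> carrier_mat k k" "P * N = N"
    unfolding P_def using N by (auto simp: mp_inv_penrose)
  note Hi = mat_inv_inverts[OF H] mat_inv_cancel[OF H]
  have comm: "H * P = P * H"
    using comm unfolding P_def .
  have "P * (H * N) = (P * H) * N"
    using P H N by (simp add: assoc_mult_mat_dims)
  also have "\<dots> = H * (P * N)"
    using P H N by (simp flip: comm add: assoc_mult_mat_dims)
  finally have "P * (H * N) = H * N"
    using P(2) by simp
  then show "colspace (H * N) \<subseteq> colspace N"
    unfolding P_def using colspace_subset_iff[of "H * N" N] H N by simp
  have "mat_inv H * (P * N) = (mat_inv H * P) * N"
    using P Hi N by (simp add: assoc_mult_mat_dims)
  then have "mat_inv H * (P * N) = P * (mat_inv H * N)"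
    using mat_inv_commute[OF H P(1) comm] P Hi N by (simp add: assoc_mult_mat_dims)
  then have "N = H * (P * (mat_inv H * N))"
    using P Hi N by simp
  also have "\<dots> = (H * N) * (mp_inv N * (mat_inv H * N))"
    unfolding P_def using H Hi N by (simp add: assoc_mult_mat_dims)
  finally show "colspace N \<subseteq> colspace (H * N)"
    using colspace_mult_subset[of "H * N" "mp_inv N * (mat_inv H * N)"] H N Hi by simp
qed

lemma commute_range_proj_if_colspace_mult_eq:
  assumes H: "H \<in> carrier_mat k k" "cadj H = H" and N: "dim_row N = k"
    and eq: "colspace (H * N) = colspace N"
  shows "H * (N * mp_inv N) = N * mp_inv N * H"
proof -
  define P where "P = N * mp_inv N"
  have P: "P \<in> carrier_mat k k" "cadj P = P"
    unfolding P_def using N by (auto simp: mp_inv_penrose)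
  have PHN: "P * (H * N) = H * N"
    unfolding P_def using colspace_subset_iff[of "H * N" N] eq H N by simp
  have "P * H * P = (P * (H * N)) * mp_inv N"
    unfolding P_def using H N by (simp add: assoc_mult_mat_dims)
  also have "\<dots> = H * P"
    unfolding PHN unfolding P_def using H N by (simp add: assoc_mult_mat_dims)
  finally have "P * H * P = H * P" .
  moreover have "cadj (P * H * P) = P * H * P" and "cadj (H * P) = P * H"
    using P H by (simp_all add: adjoint_mult assoc_mult_mat_dims)
  ultimately show ?thesis
    unfolding P_def[symmetric] by metis
qed

lemma hermitian_commute_range_proj_iff:
  assumes H: "H \<in> carrier_mat k k" "invertible_mat H" "cadj H = H" and N: "dim_row N = k"
  shows "H * (N * mp_inv N) = N * mp_inv N * H \<longleftrightarrow> colspace (H * N) = colspace N"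
  using colspace_mult_eq_if_commute_range_proj[OF H(1,2) N]
    commute_range_proj_if_colspace_mult_eq[OF H(1,3) N] by blast

lemma EP_adjoint_iff: "EP (cadj X) \<longleftrightarrow> EP X"
  unfolding EP_def by auto

lemma EP_mult_adjoint_iff:
  assumes K: "K \<in> carrier_mat k k" "invertible_mat K" "cadj K = K" and X: "dim_row X = k"
  shows "EP (K * X * cadj X) \<longleftrightarrow> colspace (K * X) = colspace X"
proof -
  have "cadj (K * X * cadj X) = X * cadj X * K"
    using K X by (simp add: adjoint_mult assoc_mult_mat_dims)
  then have "colspace (cadj (K * X * cadj X)) = colspace X"
    using colspace_mult_invertible_right[of K k "X * cadj X"] K X colspace_mult_adjoint_self by simp
  moreover have "colspace (K * X * cadj X) = colspace (K * X)"
    using K X colspace_mult_adjoint_self[of X]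
    by (simp add: assoc_mult_mat_dims colspace_mult_left[of K "X * cadj X"] colspace_mult_left[of K X])
  ultimately show ?thesis
    unfolding EP_def by auto
qed

lemma hermitian_similar_iff_commute:
  assumes K: "K \<in> carrier_mat k k" "invertible_mat K" and P: "P \<in> carrier_mat k k" "cadj P = P"
  shows "cadj (mat_inv K * P * K) = mat_inv K * P * K \<longleftrightarrow> K * cadj K * P = P * (K * cadj K)"
proof -
  note Ki = mat_inv_inverts[OF K] mat_inv_cancel[OF K]
  have Kh: "cadj K \<in> carrier_mat k k" "invertible_mat (cadj K)"
    using K invertible_mat_adjoint by auto
  note Khi = mat_inv_inverts[OF Kh] mat_inv_cancel[OF Kh]
  have KiKh: "cadj (mat_inv K) * cadj K = 1\<^sub>m k"
    using K Ki by (simp flip: adjoint_mult)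
  define \<Phi> where "\<Phi> X = K * X * cadj K" for X
  have \<Phi>_inj: "\<Phi> X = \<Phi> Y \<longleftrightarrow> X = Y" if "X \<in> carrier_mat k k" "Y \<in> carrier_mat k k" for X Y
  proof
    assume "\<Phi> X = \<Phi> Y"
    then have "mat_inv K * \<Phi> X * mat_inv (cadj K) = mat_inv K * \<Phi> Y * mat_inv (cadj K)"
      by simp
    then show "X = Y"
      unfolding \<Phi>_def using that K Ki Kh Khi by (simp add: assoc_mult_mat_dims)
  qed simp
  have "\<Phi> (cadj (mat_inv K * P * K)) = K * cadj K * P * (cadj (mat_inv K) * cadj K)"
    unfolding \<Phi>_def using K Ki P by (simp add: adjoint_mult assoc_mult_mat_dims)
  then have 1: "\<Phi> (cadj (mat_inv K * P * K)) = K * cadj K * P"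
    using K P by (simp add: KiKh)
  have 2: "\<Phi> (mat_inv K * P * K) = P * (K * cadj K)"
    unfolding \<Phi>_def using K Ki P by (simp add: assoc_mult_mat_dims)
  have "cadj (mat_inv K * P * K) = mat_inv K * P * K \<longleftrightarrow>
      \<Phi> (cadj (mat_inv K * P * K)) = \<Phi> (mat_inv K * P * K)"
    using K Ki P by (intro \<Phi>_inj[symmetric]) simp_all
  then show ?thesis
    unfolding 1 2 .
qed

section \<open>The Moore--Penrose inverse of \<open>A B C\<close>\<close>

locale nonsingular_sandwich =
  fixes A B C :: "complex mat" and m n :: nat
  assumes A: "A \<in> carrier_mat m m" "invertible_mat A"
    and B: "B \<in> carrier_mat m n"
    and C: "C \<in> carrier_mat n n" "invertible_mat C"
begin

definition G :: "complex mat" where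
  "G = C * mp_inv (A * B * C) * A"

lemma M_carrier: "A * B * C \<in> carrier_mat m n"
  using A B C by simp

lemma mp_inv_M_carrier: "mp_inv (A * B * C) \<in> carrier_mat n m"
  using M_carrier by (rule mp_inv_carrier_matI)

lemma G_carrier: "G \<in> carrier_mat n m"
  unfolding G_def using A C mp_inv_M_carrier by simp

lemmas inverse_rules = mat_inv_inverts[OF A] mat_inv_cancel[OF A] mat_inv_inverts[OF C] mat_inv_cancel[OF C]

lemma mp_inv_M_eq_iff:
  assumes X: "X \<in> carrier_mat n m"
  shows "mp_inv (A * B * C) = mat_inv C * X * mat_inv A \<longleftrightarrow> X = G"
proof
  assume "mp_inv (A * B * C) = mat_inv C * X * mat_inv A"
  then show "X = G"
    unfolding G_def using A C X inverse_rules by (simp add: assoc_mult_mat_dims)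
next
  assume "X = G"
  then show "mp_inv (A * B * C) = mat_inv C * X * mat_inv A"
    unfolding G_def using A B C inverse_rules by (simp add: assoc_mult_mat_dims)
qed

lemma mp_inv_in_trans_gen_inv_iff:
  "mp_inv (A * B * C) \<in> trans_gen_inv C I B A \<longleftrightarrow> G \<in> gen_inv I B"
  unfolding trans_gen_inv_def using mp_inv_M_eq_iff B by (auto simp: gen_inv_def)

lemma B_G_eq: "B * G = mat_inv A * ((A * B * C) * mp_inv (A * B * C)) * A"
  unfolding G_def using A B C inverse_rules by (simp add: assoc_mult_mat_dims)

lemma G_B_eq: "G * B = C * (mp_inv (A * B * C) * (A * B * C)) * mat_inv C"
  unfolding G_def using A B C inverse_rules by (simp add: assoc_mult_mat_dims)

lemma B_G_B: "B * G * B = B"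
proof -
  have "B * G * B = mat_inv A * ((A * B * C) * mp_inv (A * B * C) * (A * B * C)) * mat_inv C"
    unfolding B_G_eq using A B C inverse_rules by (simp add: assoc_mult_mat_dims)
  then show ?thesis
    unfolding mp_inv_penrose(1) using A B C inverse_rules by (simp add: assoc_mult_mat_dims)
qed

lemma G_B_G: "G * B * G = G"
proof -
  have "G * B * G = C * (mp_inv (A * B * C) * (A * B * C) * mp_inv (A * B * C)) * A"
    unfolding G_B_eq unfolding G_def using A B C inverse_rules by (simp add: assoc_mult_mat_dims)
  then show ?thesis
    unfolding mp_inv_penrose(2) G_def .
qed

lemma hermitian_B_G_iff_commute:
  "cadj (B * G) = B * G \<longleftrightarrow>
   A * cadj A * ((A * B * C) * mp_inv (A * B * C)) = (A * B * C) * mp_inv (A * B * C) * (A * cadj A)"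
  unfolding B_G_eq
  by (rule hermitian_similar_iff_commute[OF A])
    (use M_carrier mp_inv_M_carrier in \<open>simp_all add: mp_inv_penrose\<close>)

lemma colspace_AAh_M_iff:
  "colspace (A * cadj A * (A * B * C)) = colspace (A * B * C) \<longleftrightarrow>
   colspace (cadj A * A * B) = colspace B"
proof -
  have "colspace (A * cadj A * (A * B * C)) = colspace (A * (cadj A * A * B))"
    using A B C colspace_mult_invertible_right[OF C, of "A * (cadj A * A * B)"]
    by (simp add: assoc_mult_mat_dims)
  moreover have "colspace (A * B * C) = colspace (A * B)"
    using A B C colspace_mult_invertible_right[OF C, of "A * B"] by simp
  ultimately show ?thesis
    using A B colspace_mult_invertible_left_iff[OF A, of "cadj A * A * B" B] by simp
qed

lemma AAh_hermitian_invertible: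
  "A * cadj A \<in> carrier_mat m m" "invertible_mat (A * cadj A)" "cadj (A * cadj A) = A * cadj A"
  using A invertible_mat_mult[OF A adjoint_carrier_mat[OF A(1)] invertible_mat_adjoint[OF A]]
  by (simp_all add: adjoint_mult)

lemma hermitian_B_G_iff: "cadj (B * G) = B * G \<longleftrightarrow> colspace (cadj A * A * B) = colspace B"
  using hermitian_B_G_iff_commute hermitian_commute_range_proj_iff[OF AAh_hermitian_invertible, of "A * B * C"]
    colspace_AAh_M_iff A by simp

lemma EP_AhA_B_Bh_iff: "EP (cadj A * A * B * cadj B) \<longleftrightarrow> colspace (cadj A * A * B) = colspace B"
proof -
  have "cadj A * A \<in> carrier_mat m m" "invertible_mat (cadj A * A)" "cadj (cadj A * A) = cadj A * A"
    using mult_carrier_mat[OF adjoint_carrier_mat[OF A(1)] A(1)] A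
      invertible_mat_mult[OF adjoint_carrier_mat[OF A(1)] invertible_mat_adjoint[OF A] A]
    by (simp_all add: adjoint_mult)
  then show ?thesis
    using EP_mult_adjoint_iff[of "cadj A * A" m B] B by simp
qed

lemma EP_AAh_M_Mh_iff:
  "EP (A * cadj A * (A * B * C) * cadj (A * B * C)) \<longleftrightarrow> colspace (cadj A * A * B) = colspace B"
  using EP_mult_adjoint_iff[OF AAh_hermitian_invertible, of "A * B * C"] colspace_AAh_M_iff A by simp

lemma dual_sandwich: "nonsingular_sandwich (cadj C) (cadj B) (cadj A) n m"
  using A B C by unfold_locales (auto intro: invertible_mat_adjoint)

lemma adjoint_M: "cadj (A * B * C) = cadj C * cadj B * cadj A"
  using A B C by (simp add: adjoint_mult assoc_mult_mat_dims)

lemma dual_G_eq: "nonsingular_sandwich.G (cadj C) (cadj B) (cadj A) = cadj G"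
  unfolding nonsingular_sandwich.G_def[OF dual_sandwich] G_def
  using A C mp_inv_M_carrier by (simp add: adjoint_mult assoc_mult_mat_dims flip: adjoint_M mp_inv_adjoint)

lemma hermitian_G_B_iff: "cadj (G * B) = G * B \<longleftrightarrow> colspace (C * cadj C * cadj B) = colspace (cadj B)"
proof -
  interpret dual: nonsingular_sandwich "cadj C" "cadj B" "cadj A" n m
    by (rule dual_sandwich)
  have "cadj B * cadj G = cadj (G * B)"
    using B G_carrier by (simp add: adjoint_mult)
  then show ?thesis
    using dual.hermitian_B_G_iff unfolding dual_G_eq by (metis adjoint_adjoint)
qed

lemma G_in_gen_inv_iff:
  "G \<in> gen_inv I B \<longleftrightarrow> (3 \<in> I \<longrightarrow> colspace (cadj A * A * B) = colspace B) \<and>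
     (4 \<in> I \<longrightarrow> colspace (C * cadj C * cadj B) = colspace (cadj B))"
  unfolding gen_inv_def using G_carrier B B_G_B G_B_G hermitian_B_G_iff hermitian_G_B_iff by auto

lemma colspace_ChC_Mh_iff:
  "colspace (cadj C * C * cadj (A * B * C)) = colspace (cadj (A * B * C)) \<longleftrightarrow>
   colspace (C * cadj C * cadj B) = colspace (cadj B)"
proof -
  interpret dual: nonsingular_sandwich "cadj C" "cadj B" "cadj A" n m
    by (rule dual_sandwich)
  show ?thesis
    using dual.colspace_AAh_M_iff unfolding adjoint_M[symmetric] adjoint_adjoint .
qed

lemma EP_Bh_B_CCh_iff:
  "EP (cadj B * B * C * cadj C) \<longleftrightarrow> colspace (C * cadj C * cadj B) = colspace (cadj B)"
proof -
  interpret dual: nonsingular_sandwich "cadj C" "cadj B" "cadj A" n m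
    by (rule dual_sandwich)
  have "cadj (cadj B * B * C * cadj C) = C * cadj C * cadj B * B"
    using B C by (simp add: adjoint_mult assoc_mult_mat_dims)
  then show ?thesis
    using dual.EP_AhA_B_Bh_iff EP_adjoint_iff[of "cadj B * B * C * cadj C"] by simp
qed

lemma EP_Mh_M_ChC_iff:
  "EP (cadj (A * B * C) * (A * B * C) * cadj C * C) \<longleftrightarrow>
   colspace (C * cadj C * cadj B) = colspace (cadj B)"
proof -
  interpret dual: nonsingular_sandwich "cadj C" "cadj B" "cadj A" n m
    by (rule dual_sandwich)
  have "cadj (cadj (A * B * C) * (A * B * C) * cadj C * C) =
      cadj C * C * cadj (A * B * C) * (A * B * C)"
    using A B C by (simp add: adjoint_mult assoc_mult_mat_dims)
  moreover have "EP (cadj C * C * cadj (A * B * C) * (A * B * C)) \<longleftrightarrow>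
      colspace (C * cadj C * cadj B) = colspace (cadj B)"
    using dual.EP_AAh_M_Mh_iff unfolding adjoint_M[symmetric] adjoint_adjoint .
  ultimately show ?thesis
    using EP_adjoint_iff by metis
qed

lemma mp_inv_M_reverse_order_iff:
  "mp_inv (A * B * C) = mat_inv C * mp_inv B * mat_inv A \<longleftrightarrow> G \<in> gen_inv {1, 2, 3, 4} B"
  using mp_inv_M_eq_iff[of "mp_inv B"] B mp_inv_eqI[of G B] mp_inv_in_gen_inv[of B] by auto

end

theorem theorem4p2:
  fixes A B C :: "complex mat" and m n :: nat
  assumes "m \<ge> 1" "n \<ge> 1"
    and "A \<in> carrier_mat m m" "B \<in> carrier_mat m n" "C \<in> carrier_mat n n"
    and "invertible_mat A" "invertible_mat C"
  defines "M \<equiv> A * B * C"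
  defines "R1 \<equiv> colspace (cadj A * A * B) = colspace B"
  defines "R2 \<equiv> colspace (C * cadj C * cadj B) = colspace (cadj B)"
  shows
    "(mp_inv M \<in> trans_gen_inv C {1} B A) \<and>
     (mp_inv M \<in> trans_gen_inv C {1,2} B A) \<and>
     (mp_inv M \<in> trans_gen_inv C {1,3} B A \<longleftrightarrow> R1) \<and>
     (mp_inv M \<in> trans_gen_inv C {1,4} B A \<longleftrightarrow> R2) \<and>
     (mp_inv M \<in> trans_gen_inv C {1,2,3} B A \<longleftrightarrow> R1) \<and>
     (mp_inv M \<in> trans_gen_inv C {1,2,4} B A \<longleftrightarrow> R2) \<and>
     (mp_inv M \<in> trans_gen_inv C {1,3,4} B A \<longleftrightarrow> R1 \<and> R2) \<and>
     ((mp_inv M = mat_inv C * mp_inv B * mat_inv A) \<longleftrightarrow> R1 \<and> R2) \<and>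
     ((colspace (A * cadj A * M) = colspace M \<and> colspace (cadj C * C * cadj M) = colspace (cadj M))
      \<longleftrightarrow> R1 \<and> R2) \<and>
     (((cadj A * A * B) * mp_inv (cadj A * A * B) = B * mp_inv B \<and>
      mp_inv (B * C * cadj C) * (B * C * cadj C) = mp_inv B * B) \<longleftrightarrow> R1 \<and> R2) \<and>
     ((EP (cadj A * A * B * cadj B) \<and> EP (cadj B * B * C * cadj C)) \<longleftrightarrow> R1 \<and> R2) \<and>
     ((EP (A * cadj A * M * cadj M) \<and> EP (cadj M * M * cadj C * C)) \<longleftrightarrow> R1 \<and> R2)"
proof -
  interpret nonsingular_sandwich A B C m n
    using assms by unfold_locales auto
  have trans: "mp_inv M \<in> trans_gen_inv C I B A \<longleftrightarrow> (3 \<in> I \<longrightarrow> R1) \<and> (4 \<in> I \<longrightarrow> R2)" for I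
    unfolding M_def R1_def R2_def by (simp add: mp_inv_in_trans_gen_inv_iff G_in_gen_inv_iff)
  have proj_R1: "(cadj A * A * B) * mp_inv (cadj A * A * B) = B * mp_inv B \<longleftrightarrow> R1"
    unfolding R1_def using assms by (simp add: colspace_eq_iff_proj_eq)
  have "mp_inv (B * C * cadj C) * (B * C * cadj C) = mp_inv B * B \<longleftrightarrow>
      (C * cadj C * cadj B) * mp_inv (C * cadj C * cadj B) = cadj B * mp_inv (cadj B)"
    using assms by (simp add: mp_inv_mult_self adjoint_mult assoc_mult_mat_dims)
  then have proj_R2: "mp_inv (B * C * cadj C) * (B * C * cadj C) = mp_inv B * B \<longleftrightarrow> R2"
    unfolding R2_def using assms by (simp add: colspace_eq_iff_proj_eq)
  show ?thesis
    using trans[of "{1}"] trans[of "{1,2}"] trans[of "{1,3}"] trans[of "{1,4}"] trans[of "{1,2,3}"]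
      trans[of "{1,2,4}"] trans[of "{1,3,4}"] proj_R1 proj_R2
      mp_inv_M_reverse_order_iff G_in_gen_inv_iff[of "{1,2,3,4}"] colspace_AAh_M_iff colspace_ChC_Mh_iff
      EP_AhA_B_Bh_iff EP_Bh_B_CCh_iff EP_AAh_M_Mh_iff EP_Mh_M_ChC_iff
    unfolding M_def R1_def R2_def by simp
qed

end
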